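(* Let $(A,\to,0,1)$ be a bounded algebra satisfying ( ** ) and (DN). Then for all $x,y\in A$, $x\le y$ if and only if $y^-\le x^-$.
   Context: $(A,\to,1)$ is an algebra of type $(2,0)$ and $x\le y$ means $x\to y=1$. ( ** ): $y\to z=1$ implies $(z\to x)\to(y\to x)=1$, for all $x,y,z$. (L): $x\to1=1$ for all $x$. An element $0$ with $0\le x$ for all $x$ is a zero; the algebra is bounded, written $(A,\to,0,1)$, if it has a unique zero $0$ and satisfies (L). Negation: $x^-=x\to 0$. (DN): $(x^-)^-=x$ for all $x$. *)

theory Defs
  imports Main
begin

text \<open>An algebra (A, imp, one) of type (2,0); the carrier is the whole type 'a.\<close>

definition le_imp :: "('a \<Rightarrow> 'a \<Rightarrow> 'a) \<Rightarrow> 'a \<Rightarrow> 'a \<Rightarrow> 'a \<Rightarrow> bool" where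
  "le_imp imp one x y \<longleftrightarrow> imp x y = one"

definition cond_star_star :: "('a \<Rightarrow> 'a \<Rightarrow> 'a) \<Rightarrow> 'a \<Rightarrow> bool" where
  "cond_star_star imp one \<longleftrightarrow>
     (\<forall>x y z. imp y z = one \<longrightarrow> imp (imp z x) (imp y x) = one)"

definition cond_L :: "('a \<Rightarrow> 'a \<Rightarrow> 'a) \<Rightarrow> 'a \<Rightarrow> bool" where
  "cond_L imp one \<longleftrightarrow> (\<forall>x. imp x one = one)"

definition is_zero :: "('a \<Rightarrow> 'a \<Rightarrow> 'a) \<Rightarrow> 'a \<Rightarrow> 'a \<Rightarrow> bool" where
  "is_zero imp one z \<longleftrightarrow> (\<forall>x. le_imp imp one z x)"

definition bounded_alg :: "('a \<Rightarrow> 'a \<Rightarrow> 'a) \<Rightarrow> 'a \<Rightarrow> 'a \<Rightarrow> bool" where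
  "bounded_alg imp zero one \<longleftrightarrow>
     is_zero imp one zero \<and> (\<forall>z. is_zero imp one z \<longrightarrow> z = zero) \<and> cond_L imp one"

definition neg :: "('a \<Rightarrow> 'a \<Rightarrow> 'a) \<Rightarrow> 'a \<Rightarrow> 'a \<Rightarrow> 'a" where
  "neg imp zero x = imp x zero"

definition cond_DN :: "('a \<Rightarrow> 'a \<Rightarrow> 'a) \<Rightarrow> 'a \<Rightarrow> bool" where
  "cond_DN imp zero \<longleftrightarrow> (\<forall>x. neg imp zero (neg imp zero x) = x)"

end

theory Submission
  imports Defs
begin

text \<open>Instantiating (**) at \<open>0\<close> makes negation antitone; applying this to \<open>y\<^sup>-\<close> and \<open>x\<^sup>-\<close>
  and removing the double negations with (DN) gives the converse.\<close>

lemma neg_antitone: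
  assumes "cond_star_star imp one" and "le_imp imp one x y"
  shows "le_imp imp one (neg imp zero y) (neg imp zero x)"
  using assms unfolding cond_star_star_def le_imp_def neg_def by blast

lemma le_of_neg_le_neg:
  assumes "cond_star_star imp one" and "cond_DN imp zero"
    and "le_imp imp one (neg imp zero y) (neg imp zero x)"
  shows "le_imp imp one x y"
proof -
  have "le_imp imp one (neg imp zero (neg imp zero x)) (neg imp zero (neg imp zero y))"
    using neg_antitone assms(1,3) .
  then show ?thesis
    using assms(2) unfolding cond_DN_def by simp
qed

theorem proposition2p13:
  fixes imp :: "'a \<Rightarrow> 'a \<Rightarrow> 'a" and zero one :: 'a
  assumes "bounded_alg imp zero one"
    and "cond_star_star imp one"
    and "cond_DN imp zero"
  shows "\<forall>x y. le_imp imp one x y \<longleftrightarrow> le_imp imp one (neg imp zero y) (neg imp zero x)"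
  using neg_antitone[OF assms(2)] le_of_neg_le_neg[OF assms(2,3)] by blast

end
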